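(* Let $N\le K$ be positive integers with $K\le\frac{N^2+1}{2}$. Then for every $M\in[\frac1K,\frac NK]$, the worst-case rate achieved by the lower convex envelope of the pairs $\left(N-\frac{N}{K}\frac{N+1}{g+1},\frac{N}{Kg}\right)$, $g\in\{1,\dots,N\}$, is no larger than the rate at memory $M$ of the lower convex envelope of the pairs $$(R_{\mathrm{MDS}},M_{\mathrm{MDS}})=\left(\frac{N(K-t)}{K},\ \frac{t\left[(N-1)t+K-N\right]}{K(K-1)}\right),\quad t=0,1,\dots,K.$$
   Context: In the caching setting with $N$ files of $F$ bits, $K$ users each with cache $MF$ bits, and worst-case delivery rate $R^*$ (in units of $F$ bits), the pairs $(R_{\mathrm{MDS}},M_{\mathrm{MDS}})$ above are rate–memory pairs achieved by a previously known scheme (based on MDS and rank-metric codes); the pairs $\left(N-\frac{N}{K}\frac{N+1}{g+1},\frac{N}{Kg}\right)$, $g=1,\dots,N$, are those achieved by the scheme of this paper. The lower convex envelope of a finite set of (rate, memory) points is taken as a function of $M$. *)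

theory Defs
  imports "HOL-Analysis.Analysis"
begin

text \<open>Points are (memory, rate) pairs.\<close>
definition lower_convex_envelope :: "(real \<times> real) set \<Rightarrow> real \<Rightarrow> real" where
  "lower_convex_envelope P M = Inf {r. (M, r) \<in> convex hull P}"

definition new_points :: "nat \<Rightarrow> nat \<Rightarrow> (real \<times> real) set" where
  "new_points N K = (\<lambda>g::nat. (real N / (real K * real g),
       real N - real N / real K * ((real N + 1) / (real g + 1)))) ` {1..N}"

definition mds_points :: "nat \<Rightarrow> nat \<Rightarrow> (real \<times> real) set" where
  "mds_points N K = (\<lambda>t::nat.
       (real t * ((real N - 1) * real t + real K - real N) / (real K * (real K - 1)),
        real N * (real K - real t) / real K)) ` {0..K}"

end

theory Submission
  imports Defs
begin

text \<open>Choose g with M between the memories of the new points g + 1 and g. The new envelope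
  at M lies on or below the chord through these two points. Every MDS point lies on or above
  the line carrying that chord: the vertical gap is a quadratic in t which is affine in K, so
  its nonnegativity need only be checked at the extreme values K = N and K = (N^2 + 1)/2.
  Hence the convex hull of the MDS points, and with it their envelope at M, lies above the
  chord.\<close>

lemma lower_convex_envelope_le:
  assumes "finite P" and "(M, r) \<in> convex hull P"
  shows "lower_convex_envelope P M \<le> r"
proof -
  have "compact (snd ` (convex hull P))"
    using assms(1) by (intro compact_continuous_image continuous_intros compact_convex_hull finite_imp_compact)
  then have "bdd_below {r. (M, r) \<in> convex hull P}"
    by (rule bdd_below_mono[OF bounded_imp_bdd_below[OF compact_imp_bounded]]) force
  then show ?thesis
    unfolding lower_convex_envelope_def using assms(2) by (auto intro: cInf_lower)
qed

lemma lower_convex_envelope_ge_of_above_line: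
  assumes above: "\<And>p. p \<in> P \<Longrightarrow> a * fst p + b \<le> snd p"
    and "(M, r) \<in> convex hull P"
  shows "a * M + b \<le> lower_convex_envelope P M"
proof -
  let ?H = "{p :: real \<times> real. inner (a, -1) p \<le> - b}"
  have "convex hull P \<subseteq> ?H"
    using above by (intro hull_minimal convex_halfspace_le) (force simp: inner_prod_def)
  then show ?thesis
    unfolding lower_convex_envelope_def using assms(2)
    by (intro cInf_greatest) (auto simp: inner_prod_def)
qed

lemma chord_point_in_convex_hull:
  fixes a b M x\<^sub>1 x\<^sub>2 :: real
  assumes "(x\<^sub>1, a * x\<^sub>1 + b) \<in> P" and "(x\<^sub>2, a * x\<^sub>2 + b) \<in> P"
    and "x\<^sub>1 \<le> M" and "M \<le> x\<^sub>2"
  shows "(M, a * M + b) \<in> convex hull P"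
proof -
  obtain u where u: "0 \<le> u" "u \<le> 1" "M = x\<^sub>1 + u * (x\<^sub>2 - x\<^sub>1)"
  proof (cases "x\<^sub>1 = x\<^sub>2")
    case True
    then show ?thesis using assms(3,4) that[of 0] by simp
  next
    case False
    then have "x\<^sub>1 < x\<^sub>2" using assms(3,4) by simp
    then show ?thesis
      using assms(3,4) by (intro that[of "(M - x\<^sub>1) / (x\<^sub>2 - x\<^sub>1)"]) auto
  qed
  then have "(M, a * M + b) \<in> closed_segment (x\<^sub>1, a * x\<^sub>1 + b) (x\<^sub>2, a * x\<^sub>2 + b)"
    unfolding in_segment u(3) using u(1,2) by (intro exI[of _ u]) (simp add: algebra_simps)
  also have "\<dots> \<subseteq> convex hull P"
    unfolding segment_convex_hull using assms(1,2) by (intro hull_mono) simp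
  finally show ?thesis .
qed

lemma lower_convex_envelope_le_of_separating_line:
  fixes a b M x\<^sub>1 x\<^sub>2 r :: real
  assumes "finite P"
    and "(x\<^sub>1, a * x\<^sub>1 + b) \<in> P" and "(x\<^sub>2, a * x\<^sub>2 + b) \<in> P"
    and "x\<^sub>1 \<le> M" and "M \<le> x\<^sub>2"
    and "\<And>q. q \<in> Q \<Longrightarrow> a * fst q + b \<le> snd q"
    and "(M, r) \<in> convex hull Q"
  shows "lower_convex_envelope P M \<le> lower_convex_envelope Q M"
  using lower_convex_envelope_le[OF assms(1) chord_point_in_convex_hull[OF assms(2-5)]]
    lower_convex_envelope_ge_of_above_line[OF assms(6,7)]
  by linarith

definition new_memory :: "nat \<Rightarrow> nat \<Rightarrow> nat \<Rightarrow> real" where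
  "new_memory N K g = real N / (real K * real g)"

definition new_rate :: "nat \<Rightarrow> nat \<Rightarrow> nat \<Rightarrow> real" where
  "new_rate N K g = real N - real N / real K * ((real N + 1) / (real g + 1))"

lemma new_points_eq: "new_points N K = (\<lambda>g. (new_memory N K g, new_rate N K g)) ` {1..N}"
  unfolding new_points_def new_memory_def new_rate_def ..

definition mds_memory :: "nat \<Rightarrow> nat \<Rightarrow> nat \<Rightarrow> real" where
  "mds_memory N K t = real t * ((real N - 1) * real t + real K - real N) / (real K * (real K - 1))"

definition mds_rate :: "nat \<Rightarrow> nat \<Rightarrow> nat \<Rightarrow> real" where
  "mds_rate N K t = real N * (real K - real t) / real K"

lemma mds_points_eq: "mds_points N K = (\<lambda>t. (mds_memory N K t, mds_rate N K t)) ` {0..K}"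
  unfolding mds_points_def mds_memory_def mds_rate_def ..

definition new_chord_slope :: "nat \<Rightarrow> nat \<Rightarrow> real" where
  "new_chord_slope N g = - (real N + 1) * real g / (real g + 2)"

definition new_chord_intercept :: "nat \<Rightarrow> nat \<Rightarrow> nat \<Rightarrow> real" where
  "new_chord_intercept N K g = new_rate N K g - new_chord_slope N g * new_memory N K g"

lemma new_rate_on_chord:
  "new_rate N K g = new_chord_slope N g * new_memory N K g + new_chord_intercept N K g"
  unfolding new_chord_intercept_def by simp

lemma new_rate_Suc_on_chord:
  assumes "1 \<le> g"
  shows "new_rate N K (Suc g) = new_chord_slope N g * new_memory N K (Suc g) + new_chord_intercept N K g"
proof -
  have "real g \<noteq> 0" "real g + 1 \<noteq> 0" "real g + 2 \<noteq> 0"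
    using assms by auto
  then show ?thesis
    unfolding new_chord_intercept_def new_chord_slope_def new_memory_def new_rate_def
    by (cases "K = 0") (simp_all add: divide_simps, algebra)
qed

text \<open>The height of the t-th MDS point above the line through the new points g and g + 1,
  scaled by K (K - 1) (g + 1) (g + 2).\<close>
definition mds_gap :: "real \<Rightarrow> real \<Rightarrow> real \<Rightarrow> real \<Rightarrow> real" where
  "mds_gap n k g t = (n + 1) * g * (g + 1) * (n - 1) * t ^ 2
     + ((n + 1) * g * (g + 1) * (k - n) - n * (g + 1) * (g + 2) * (k - 1)) * t
     + n * (n + 1) * (k - 1)"

lemma mds_rate_minus_new_chord:
  assumes "2 \<le> K" and "1 \<le> g"
  shows "mds_rate N K t - (new_chord_slope N g * mds_memory N K t + new_chord_intercept N K g)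
    = mds_gap N K g t / (real K * (real K - 1) * (real g + 1) * (real g + 2))"
proof -
  have "real K \<noteq> 0" "real K - 1 \<noteq> 0" "real g \<noteq> 0" "real g + 1 \<noteq> 0" "real g + 2 \<noteq> 0"
    using assms by auto
  then show ?thesis
    unfolding mds_gap_def mds_rate_def mds_memory_def new_chord_intercept_def new_chord_slope_def
      new_memory_def new_rate_def
    by (simp add: divide_simps power2_eq_square) (simp add: algebra_simps)
qed

lemma mds_gap_affine_in_K:
  "mds_gap n k g t = mds_gap n k' g t + (k - k') * ((g + 1) * t * (g - 2 * n) + n * (n + 1))"
  unfolding mds_gap_def by (simp add: algebra_simps)

lemma int_times_succ_nonneg: "0 \<le> real_of_int m * (real_of_int m + 1)"
proof (cases "m \<ge> 0")
  case False
  then have "real_of_int m + 1 \<le> 0" and "real_of_int m \<le> 0" by linarith+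
  then show ?thesis by (simp add: mult_nonpos_nonpos)
qed simp

lemma mds_gap_at_max_K_nonneg:
  fixes N g t :: nat
  assumes "1 \<le> N" and "1 \<le> g"
  shows "0 \<le> mds_gap N ((real N ^ 2 + 1) / 2) g t"
proof -
  define m where "m = int N - int (g + 1) * int t"
  have gap_eq: "mds_gap N ((real N ^ 2 + 1) / 2) g t = (real N ^ 2 - 1) / 2 *
      (real_of_int m * (real_of_int m + 1)
       + (real g ^ 2 - 1) * (real_of_int (int t - 1) * (real_of_int (int t - 1) + 1)))"
    unfolding mds_gap_def m_def by (simp add: field_simps power2_eq_square)
  have "1 \<le> real N ^ 2" "1 \<le> real g ^ 2"
    using assms by simp_all
  then have "0 \<le> (real g ^ 2 - 1) * (real_of_int (int t - 1) * (real_of_int (int t - 1) + 1))"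
    by (intro mult_nonneg_nonneg[OF _ int_times_succ_nonneg]) simp
  then show ?thesis
    unfolding gap_eq using \<open>1 \<le> real N ^ 2\<close> int_times_succ_nonneg[of m] by simp
qed

lemma mds_gap_at_K_eq_N_nonneg:
  fixes N g t :: nat
  assumes "1 \<le> g" and "g + 1 \<le> N"
  shows "0 \<le> mds_gap N N g t"
proof -
  define h where "h = (real N + 1) * real g * (real g + 1) * real t ^ 2
    - real N * (real g + 1) * (real g + 2) * real t + real N * (real N + 1)"
  have gap_eq: "mds_gap N N g t = (real N - 1) * h"
    unfolding mds_gap_def h_def by (simp add: algebra_simps)
  have h_eq: "h = real N ^ 2 + real N + real g * (real g + 1) * real t ^ 2
      + real N * ((real g + 1) * real t * (real g * real t - real g - 2))"
    unfolding h_def by (simp add: algebra_simps power2_eq_square)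
  consider "t = 0" | "t = 1" | "t = 2" "g = 1" | "2 \<le> real g * real t - real g"
  proof (cases "2 \<le> g")
    case True
    have "2 * 1 \<le> real g * (real t - 1)" if "2 \<le> t"
    proof (rule mult_mono)
      show "2 \<le> real g" "1 \<le> real t - 1"
        using \<open>2 \<le> g\<close> that by simp_all
    qed simp_all
    then show ?thesis
      using that by (cases "2 \<le> t"; cases "t = 0") (auto simp: algebra_simps)
  next
    case False
    then have "g = 1" using assms(1) by simp
    then show ?thesis
      using that by (cases "t \<le> 2"; cases "t \<le> 1"; cases "t = 0") auto
  qed
  then have "0 \<le> h"
  proof cases
    case 1
    then show ?thesis unfolding h_def by simp
  next
    case 2
    have "h = (real N - real g) * (real N - real g - 1)"
      unfolding h_def 2 by (simp add: algebra_simps)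
    then show ?thesis using assms(2) by simp
  next
    case 3
    have "h = (real N - 3 / 2) ^ 2 + 23 / 4"
      unfolding h_def 3 by (simp add: algebra_simps power2_eq_square)
    then show ?thesis
      using zero_le_power2[of "real N - 3 / 2"] by linarith
  next
    case 4
    then show ?thesis unfolding h_eq by simp
  qed
  then show ?thesis unfolding gap_eq using assms by simp
qed

lemma mds_gap_nonneg:
  fixes N K g t :: nat
  assumes "1 \<le> g" and "g + 1 \<le> N" and "N \<le> K" and "real K \<le> (real N ^ 2 + 1) / 2"
  shows "0 \<le> mds_gap N K g t"
proof -
  define c where "c = (real g + 1) * real t * (real g - 2 * real N) + real N * (real N + 1)"
  show ?thesis
  proof (cases "0 \<le> c")
    case True
    have "mds_gap N K g t = mds_gap N N g t + (real K - real N) * c"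
      unfolding c_def by (rule mds_gap_affine_in_K)
    then show ?thesis
      using True assms(3) mds_gap_at_K_eq_N_nonneg[OF assms(1,2)] by simp
  next
    case False
    have "mds_gap N K g t = mds_gap N ((real N ^ 2 + 1) / 2) g t + (real K - (real N ^ 2 + 1) / 2) * c"
      unfolding c_def by (rule mds_gap_affine_in_K)
    moreover have "0 \<le> (real K - (real N ^ 2 + 1) / 2) * c"
      using False assms(4) by (intro mult_nonpos_nonpos) auto
    ultimately show ?thesis
      using assms(1,2) mds_gap_at_max_K_nonneg[of N g t] by simp
  qed
qed

lemma mds_points_above_new_chord:
  assumes "2 \<le> K" and "1 \<le> g" and "g + 1 \<le> N" and "N \<le> K"
    and "real K \<le> (real N ^ 2 + 1) / 2" and "q \<in> mds_points N K"
  shows "new_chord_slope N g * fst q + new_chord_intercept N K g \<le> snd q"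
proof -
  obtain t where q: "q = (mds_memory N K t, mds_rate N K t)"
    using assms(6) unfolding mds_points_eq by auto
  have "0 < real K * (real K - 1) * (real g + 1) * (real g + 2)"
    using assms(1) by simp
  then have "0 \<le> mds_gap N K g t / (real K * (real K - 1) * (real g + 1) * (real g + 2))"
    using mds_gap_nonneg[OF assms(2-5)] by simp
  then show ?thesis
    unfolding q mds_rate_minus_new_chord[OF assms(1,2), symmetric] by simp
qed

lemma mds_convex_hull_meets_memory:
  assumes "2 \<le> K" and "0 \<le> M" and "M \<le> real N"
  shows "(M, real N - M) \<in> convex hull (mds_points N K)"
proof -
  have "mds_memory N K 0 = 0" "mds_rate N K 0 = real N"
       "mds_memory N K K = real N" "mds_rate N K K = 0"
    using assms(1) unfolding mds_memory_def mds_rate_def by (simp_all add: field_simps)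
  then have "(0, - 1 * 0 + real N) \<in> mds_points N K"
      and "(real N, - 1 * real N + real N) \<in> mds_points N K"
    unfolding mds_points_eq by (force intro: image_eqI[of _ _ 0] image_eqI[of _ _ K])+
  from chord_point_in_convex_hull[OF this assms(2,3)] show ?thesis
    by simp
qed

lemma exists_nat_unit_interval:
  fixes x :: real
  assumes "1 \<le> x" and "x \<le> real n" and "2 \<le> n"
  obtains g where "1 \<le> g" "g + 1 \<le> n" "real g \<le> x" "x \<le> real g + 1"
proof -
  define g where "g = min (nat \<lfloor>x\<rfloor>) (n - 1)"
  have "1 \<le> g" "g + 1 \<le> n" "real g \<le> x" "x \<le> real g + 1"
    using assms unfolding g_def by (auto simp: min_def of_nat_diff) linarith+
  then show ?thesis by (rule that)
qed

lemma exists_new_memory_bracket: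
  assumes "2 \<le> N" and "0 < K" and "1 / real K \<le> M" and "M \<le> real N / real K"
  obtains g where "1 \<le> g" "g + 1 \<le> N" "new_memory N K (Suc g) \<le> M" "M \<le> new_memory N K g"
proof -
  have KM: "0 < real K * M" and "1 \<le> real K * M" and "real K * M \<le> real N"
    using assms(2-4) by (auto simp: field_simps intro: less_le_trans[OF _ assms(3)])
  then have "1 \<le> real N / (real K * M)" and "real N / (real K * M) \<le> real N"
    by (simp_all add: field_simps)
  then obtain g where g: "1 \<le> g" "g + 1 \<le> N"
      "real g \<le> real N / (real K * M)" "real N / (real K * M) \<le> real g + 1"
    using exists_nat_unit_interval assms(1) by blast
  have Kg: "0 < real K * real g" "0 < real K * (real g + 1)"
    using g(1) assms(2) by simp_all
  have "real N \<le> (real g + 1) * (real K * M)"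
    using g(4) KM by (simp add: divide_le_eq)
  then have "new_memory N K (Suc g) \<le> M"
    unfolding new_memory_def using Kg(2) by (simp add: divide_le_eq algebra_simps)
  moreover have "real g * (real K * M) \<le> real N"
    using g(3) KM by (simp add: le_divide_eq)
  then have "M \<le> new_memory N K g"
    unfolding new_memory_def using Kg(1) by (simp add: le_divide_eq algebra_simps)
  ultimately show ?thesis
    using g(1,2) that by blast
qed

theorem corollary2:
  fixes N K :: nat and M :: real
  assumes "0 < N" and "N \<le> K" and "2 \<le> K"
    and "real K \<le> (real N ^ 2 + 1) / 2"
    and "1 / real K \<le> M" and "M \<le> real N / real K"
  shows "lower_convex_envelope (new_points N K) M \<le> lower_convex_envelope (mds_points N K) M"
proof -
  have "2 \<le> N"
    using assms(1,3,4) by (cases "N = 1") auto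
  then obtain g where g: "1 \<le> g" "g + 1 \<le> N"
      and M_bracket: "new_memory N K (Suc g) \<le> M" "M \<le> new_memory N K g"
    using exists_new_memory_bracket[of N K M] assms(3,5,6) by auto
  have "0 \<le> M"
    using assms(5) by (rule order.trans[rotated]) simp
  have "real N / real K \<le> real N"
    using assms(3) by (simp add: divide_le_eq mult_le_cancel_left1)
  with assms(6) have "M \<le> real N" by linarith
  show ?thesis
  proof (rule lower_convex_envelope_le_of_separating_line)
    show "finite (new_points N K)"
      unfolding new_points_def by simp
    show "(new_memory N K (Suc g), new_chord_slope N g * new_memory N K (Suc g)
        + new_chord_intercept N K g) \<in> new_points N K"
      "(new_memory N K g, new_chord_slope N g * new_memory N K g
        + new_chord_intercept N K g) \<in> new_points N K"
      unfolding new_rate_Suc_on_chord[OF g(1), symmetric] new_rate_on_chord[symmetric]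
        new_points_eq using g by auto
    show "\<And>q. q \<in> mds_points N K \<Longrightarrow> new_chord_slope N g * fst q + new_chord_intercept N K g \<le> snd q"
      using mds_points_above_new_chord assms(2-4) g by blast
    show "(M, real N - M) \<in> convex hull (mds_points N K)"
      using mds_convex_hull_meets_memory assms(3) \<open>0 \<le> M\<close> \<open>M \<le> real N\<close> by blast
  qed (use M_bracket in auto)
qed

end
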